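(* Let $G$ be a $d$-regular graph with $n$ vertices such that $2k$ divides $dn$, where $k\ge3$ is an odd integer. Then $G$ has a $k$-star decomposition if and only if $G$ has an orientation $D$ such that $d^+_D(v)-d^-_D(v)\equiv d \pmod k$ for every $v\in V(G)$.
   Context: A $k$-star decomposition of $G$ is a partition of $E(G)$ into edge-disjoint copies of $K_{1,k}$. For an orientation $D$ of $G$, $d^+_D(v)$ and $d^-_D(v)$ denote the out-degree and in-degree of $v$. *)

theory Defs
  imports Main "HOL-Library.Disjoint_Sets"
begin

definition simple_graph :: "'a set \<Rightarrow> 'a set set \<Rightarrow> bool" where
  "simple_graph V E \<longleftrightarrow> finite V \<and> (\<forall>e\<in>E. e \<subseteq> V \<and> card e = 2)"

definition degree :: "'a set set \<Rightarrow> 'a \<Rightarrow> nat" where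
  "degree E v = card {e\<in>E. v \<in> e}"

definition regular :: "'a set \<Rightarrow> 'a set set \<Rightarrow> nat \<Rightarrow> bool" where
  "regular V E d \<longleftrightarrow> (\<forall>v\<in>V. degree E v = d)"

(* S is (the edge set of) a copy of K_{1,k} in a simple graph: k edges sharing a centre
   (in a simple graph, distinct edges through the centre have distinct other ends). *)
definition is_star :: "nat \<Rightarrow> 'a set set \<Rightarrow> bool" where
  "is_star k S \<longleftrightarrow> card S = k \<and> (\<exists>c. \<forall>e\<in>S. c \<in> e)"

definition star_decomposition :: "nat \<Rightarrow> 'a set set \<Rightarrow> 'a set set set \<Rightarrow> bool" where
  "star_decomposition k E P \<longleftrightarrow> partition_on E P \<and> (\<forall>S\<in>P. is_star k S)"

definition has_star_decomposition :: "nat \<Rightarrow> 'a set set \<Rightarrow> bool" where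
  "has_star_decomposition k E \<longleftrightarrow> (\<exists>P. star_decomposition k E P)"

definition orientation :: "'a set set \<Rightarrow> ('a \<times> 'a) set \<Rightarrow> bool" where
  "orientation E D \<longleftrightarrow>
     (\<forall>(u,v)\<in>D. {u,v} \<in> E) \<and>
     (\<forall>u v. {u,v} \<in> E \<longrightarrow> ((u,v) \<in> D \<longleftrightarrow> (v,u) \<notin> D))"

definition out_deg :: "('a \<times> 'a) set \<Rightarrow> 'a \<Rightarrow> nat" where
  "out_deg D v = card {w. (v,w) \<in> D}"

definition in_deg :: "('a \<times> 'a) set \<Rightarrow> 'a \<Rightarrow> nat" where
  "in_deg D v = card {w. (w,v) \<in> D}"

end

theory Submission
  imports Defs
begin

(* Orient every edge of a k-star decomposition towards the centre of its star. The in-edges of v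
   are then the union of the stars centred at v, so k divides the in-degree of v; conversely, if k
   divides every in-degree, cutting the in-edges of each vertex into blocks of k edges gives a
   k-star decomposition. As d^+(v) + d^-(v) = d, the condition d^+(v) - d^-(v) = d (mod k) says
   k | 2 d^-(v), which for odd k is k | d^-(v). *)

lemma exists_partition_on_card_eq:
  assumes "finite A" "0 < k" "k dvd card A"
  shows "\<exists>P. partition_on A P \<and> (\<forall>S\<in>P. card S = k)"
  using assms
proof (induction "card A" arbitrary: A rule: less_induct)
  case less
  show ?case
  proof (cases "A = {}")
    case True
    then show ?thesis by (auto simp: partition_on_empty)
  next
    case False
    with less.prems have "k \<le> card A" by (simp add: dvd_imp_le card_gt_0_iff)
    then obtain B where B: "B \<subseteq> A" "card B = k"
      by (meson obtain_subset_with_card_n)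
    have "card (A - B) = card A - k"
      using B less.prems by (simp add: card_Diff_subset finite_subset)
    then have "card (A - B) < card A" "k dvd card (A - B)"
      using less.prems False by (simp_all add: card_gt_0_iff dvd_diff_nat)
    then obtain P where P: "partition_on (A - B) P" "\<forall>S\<in>P. card S = k"
      using less.hyps[of "A - B"] less.prems by blast
    have "disjnt B (\<Union>P)"
      using P(1) by (auto simp: partition_on_def disjnt_def)
    moreover have "B \<noteq> {}"
      using B less.prems by auto
    ultimately have "partition_on A (insert B P)"
      using partition_on_insert P B by auto
    then show ?thesis
      using P B by blast
  qed
qed

lemma partition_on_UN:
  assumes "disjoint_family_on A I" "\<And>i. i \<in> I \<Longrightarrow> partition_on (A i) (P i)"
  shows "partition_on (\<Union>i\<in>I. A i) (\<Union>i\<in>I. P i)"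
proof -
  have "disjoint_family_on (\<lambda>i. \<Union>(P i)) I"
    using assms by (auto simp: disjoint_family_on_def partition_on_def)
  then have "disjoint (\<Union>i\<in>I. P i)"
    using assms(2) by (intro disjoint_UN) (auto simp: partition_on_def)
  moreover have "\<Union>(\<Union>i\<in>I. P i) = (\<Union>i\<in>I. A i)"
    using assms(2) by (force dest: partition_onD1)
  ultimately show ?thesis
    using assms(2) by (auto simp: partition_on_def)
qed

lemma dvd_card_Union_card_eq:
  assumes "finite (\<Union>C)" "pairwise disjnt C" "\<forall>S\<in>C. card S = k"
  shows "k dvd card (\<Union>C)"
proof -
  have "finite C"
    using assms(1) by (rule finite_UnionD)
  have "card (\<Union>C) = sum card C"
    using assms by (intro card_Union_disjoint) (auto intro: finite_subset)
  also have "\<dots> = k * card C"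
    using assms(3) by simp
  finally show ?thesis
    by simp
qed

lemma diff_mod_eq_iff_dvd:
  fixes a b d k :: nat
  assumes "odd k" "a + b = d"
  shows "(int a - int b) mod int k = int d mod int k \<longleftrightarrow> k dvd b"
proof -
  have "int a - int b - int d = - (2 * int b)"
    using assms(2) by auto
  then have "(int a - int b) mod int k = int d mod int k \<longleftrightarrow> int k dvd 2 * int b"
    by (simp only: mod_eq_dvd_iff dvd_minus_iff)
  also have "\<dots> \<longleftrightarrow> k dvd 2 * b"
    by (metis of_nat_dvd_iff of_nat_mult of_nat_numeral)
  also have "\<dots> \<longleftrightarrow> k dvd b"
    using assms(1) by (simp add: coprime_dvd_mult_right_iff)
  finally show ?thesis .
qed

lemma simple_graph_finite_edges:
  "simple_graph V E \<Longrightarrow> finite E"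
  unfolding simple_graph_def by (meson Pow_iff finite_Pow_iff finite_subset subsetI)

definition in_edges :: "('a \<times> 'a) set \<Rightarrow> 'a \<Rightarrow> 'a set set" where
  "in_edges D v = (\<lambda>u. {u, v}) ` {u. (u, v) \<in> D}"

lemma in_deg_eq_card_in_edges: "in_deg D v = card (in_edges D v)"
proof -
  have "inj_on (\<lambda>u. {u, v}) {u. (u, v) \<in> D}"
    by (auto intro: inj_onI simp: doubleton_eq_iff)
  then show ?thesis
    by (simp add: in_deg_def in_edges_def card_image)
qed

lemma out_deg_eq_in_deg_converse: "out_deg D v = in_deg (D\<inverse>) v"
  by (simp add: out_deg_def in_deg_def)

lemma orientation_converse:
  assumes "orientation E D"
  shows "orientation E (D\<inverse>)"
  unfolding orientation_def
proof (intro conjI allI impI ballI)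
  fix a assume "a \<in> D\<inverse>"
  then obtain u v where "a = (u, v)" "(v, u) \<in> D"
    by auto
  moreover from \<open>(v, u) \<in> D\<close> assms have "{v, u} \<in> E"
    unfolding orientation_def by blast
  ultimately show "case a of (u, v) \<Rightarrow> {u, v} \<in> E"
    by (simp add: insert_commute)
next
  fix u v assume "{u, v} \<in> E"
  then have "{v, u} \<in> E"
    by (simp add: insert_commute)
  with assms show "(u, v) \<in> D\<inverse> \<longleftrightarrow> (v, u) \<notin> D\<inverse>"
    unfolding orientation_def by blast
qed

lemma orientation_asym: "orientation E D \<Longrightarrow> (u, v) \<in> D \<Longrightarrow> (v, u) \<notin> D"
  unfolding orientation_def by blast

lemma in_edges_subset: "orientation E D \<Longrightarrow> in_edges D v \<subseteq> E"
  by (auto simp: orientation_def in_edges_def)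

lemma orientation_obtain_arc:
  assumes "simple_graph V E" "orientation E D" "e \<in> E"
  obtains u v where "(u, v) \<in> D" "e = {u, v}"
proof -
  obtain u v where e: "e = {u, v}"
    using assms(1,3) by (auto simp: simple_graph_def card_2_iff)
  with assms(2,3) have "(u, v) \<in> D \<or> (v, u) \<in> D"
    unfolding orientation_def by blast
  then show ?thesis
  proof
    assume "(v, u) \<in> D"
    with that show ?thesis
      using e by (simp add: insert_commute)
  qed (use that e in blast)
qed

lemma disjoint_family_in_edges:
  assumes "orientation E D"
  shows "disjoint_family_on (in_edges D) I"
  unfolding disjoint_family_on_def
proof (intro ballI impI)
  fix u v :: 'a assume "u \<noteq> v"
  show "in_edges D u \<inter> in_edges D v = {}"
  proof (rule ccontr)
    assume "in_edges D u \<inter> in_edges D v \<noteq> {}"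
    then obtain a b where "(a, u) \<in> D" "(b, v) \<in> D" "{a, u} = {b, v}"
      by (auto simp: in_edges_def)
    with \<open>u \<noteq> v\<close> have "(v, u) \<in> D" "(u, v) \<in> D"
      by (auto simp: doubleton_eq_iff)
    with assms show False
      by (auto dest: orientation_asym)
  qed
qed

lemma UN_in_edges:
  assumes "simple_graph V E" "orientation E D"
  shows "(\<Union>v\<in>V. in_edges D v) = E"
proof
  show "(\<Union>v\<in>V. in_edges D v) \<subseteq> E"
    using assms(2) by (auto dest: in_edges_subset)
next
  show "E \<subseteq> (\<Union>v\<in>V. in_edges D v)"
  proof
    fix e assume "e \<in> E"
    with assms obtain u v where uv: "(u, v) \<in> D" "e = {u, v}"
      by (rule orientation_obtain_arc)
    with \<open>e \<in> E\<close> assms(1) have "v \<in> V"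
      by (auto simp: simple_graph_def)
    with uv show "e \<in> (\<Union>v\<in>V. in_edges D v)"
      by (auto simp: in_edges_def)
  qed
qed

lemma degree_eq_out_deg_plus_in_deg:
  assumes "simple_graph V E" "orientation E D"
  shows "degree E v = out_deg D v + in_deg D v"
proof -
  have conv: "orientation E (D\<inverse>)"
    using assms(2) by (rule orientation_converse)
  have "{e \<in> E. v \<in> e} \<subseteq> in_edges (D\<inverse>) v \<union> in_edges D v"
  proof
    fix e assume "e \<in> {e \<in> E. v \<in> e}"
    then have "e \<in> E" "v \<in> e" by auto
    with assms obtain a b where "(a, b) \<in> D" "e = {a, b}"
      by (metis orientation_obtain_arc)
    with \<open>v \<in> e\<close> show "e \<in> in_edges (D\<inverse>) v \<union> in_edges D v"
      by (auto simp: in_edges_def insert_commute)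
  qed
  moreover have "in_edges D' v \<subseteq> {e \<in> E. v \<in> e}" if "orientation E D'" for D'
    using in_edges_subset[OF that] by (auto simp: in_edges_def)
  ultimately have edges_at: "{e \<in> E. v \<in> e} = in_edges (D\<inverse>) v \<union> in_edges D v"
    using assms(2) conv by blast
  have "in_edges (D\<inverse>) v \<inter> in_edges D v = {}"
  proof (rule ccontr)
    assume "in_edges (D\<inverse>) v \<inter> in_edges D v \<noteq> {}"
    then obtain a b where "(v, a) \<in> D" "(b, v) \<in> D" "{a, v} = {b, v}"
      by (auto simp: in_edges_def)
    then show False
      using assms(2) by (auto simp: doubleton_eq_iff dest: orientation_asym)
  qed
  moreover have "finite (in_edges D' v)" if "orientation E D'" for D'
    using in_edges_subset[OF that] simple_graph_finite_edges[OF assms(1)] by (rule finite_subset)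
  ultimately have "card {e \<in> E. v \<in> e} = card (in_edges (D\<inverse>) v) + card (in_edges D v)"
    unfolding edges_at using assms(2) conv by (intro card_Un_disjoint) auto
  then show ?thesis
    by (simp only: degree_def out_deg_eq_in_deg_converse in_deg_eq_card_in_edges)
qed

lemma in_deg_dvd_imp_star_decomposition:
  assumes "simple_graph V E" "orientation E D" "0 < k" "\<forall>v\<in>V. k dvd in_deg D v"
  shows "has_star_decomposition k E"
proof -
  have "\<exists>P. partition_on (in_edges D v) P \<and> (\<forall>S\<in>P. card S = k)" if "v \<in> V" for v
  proof (rule exists_partition_on_card_eq)
    show "finite (in_edges D v)"
      using in_edges_subset[OF assms(2)] simple_graph_finite_edges[OF assms(1)] by (rule finite_subset)
  qed (use assms that in \<open>simp_all add: in_deg_eq_card_in_edges\<close>)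
  then obtain P where P: "\<And>v. v \<in> V \<Longrightarrow> partition_on (in_edges D v) (P v) \<and> (\<forall>S\<in>P v. card S = k)"
    by metis
  have "partition_on E (\<Union>v\<in>V. P v)"
    using partition_on_UN[OF disjoint_family_in_edges[OF assms(2)]] P UN_in_edges[OF assms(1,2)]
    by metis
  moreover have "is_star k S" if S: "S \<in> (\<Union>v\<in>V. P v)" for S
  proof -
    obtain v where "v \<in> V" "S \<in> P v"
      using S by blast
    then have "card S = k" "S \<subseteq> in_edges D v"
      using P partition_onD1 by blast+
    then show ?thesis
      unfolding is_star_def in_edges_def by blast
  qed
  ultimately show ?thesis
    unfolding has_star_decomposition_def star_decomposition_def by blast
qed

definition star_orientation :: "'a set set set \<Rightarrow> ('a set set \<Rightarrow> 'a) \<Rightarrow> ('a \<times> 'a) set" where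
  "star_orientation P c = {(u, v). \<exists>S\<in>P. {u, v} \<in> S \<and> c S = v}"

lemma partition_on_part_unique:
  "partition_on A P \<Longrightarrow> S \<in> P \<Longrightarrow> S' \<in> P \<Longrightarrow> x \<in> S \<Longrightarrow> x \<in> S' \<Longrightarrow> S = S'"
  by (auto simp: partition_on_def dest: disjointD)

lemma star_orientation_iff:
  assumes "partition_on E P" "S \<in> P" "{u, v} \<in> S"
  shows "(u, v) \<in> star_orientation P c \<longleftrightarrow> c S = v"
  using assms partition_on_part_unique[OF assms(1)] unfolding star_orientation_def by blast

lemma orientation_star_orientation:
  assumes "simple_graph V E" "partition_on E P" "\<forall>S\<in>P. \<forall>e\<in>S. c S \<in> e"
  shows "orientation E (star_orientation P c)"
  unfolding orientation_def
proof (intro conjI allI impI ballI)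
  fix a assume "a \<in> star_orientation P c"
  then obtain u v S where "a = (u, v)" "S \<in> P" "{u, v} \<in> S"
    by (auto simp: star_orientation_def)
  with partition_onD1[OF assms(2)] show "case a of (u, v) \<Rightarrow> {u, v} \<in> E"
    by auto
next
  fix u v assume "{u, v} \<in> E"
  then obtain S where S: "S \<in> P" "{u, v} \<in> S"
    using partition_onD1[OF assms(2)] by blast
  have "{v, u} \<in> S"
    using S by (simp add: insert_commute)
  have "c S \<in> {u, v}"
    using bspec[OF bspec[OF assms(3) S(1)] S(2)] .
  moreover have "card {u, v} = 2"
    using assms(1) \<open>{u, v} \<in> E\<close> unfolding simple_graph_def by blast
  then have "u \<noteq> v"
    by (cases "u = v") simp_all
  ultimately show "(u, v) \<in> star_orientation P c \<longleftrightarrow> (v, u) \<notin> star_orientation P c"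
    unfolding star_orientation_iff[OF assms(2) S] star_orientation_iff[OF assms(2) S(1) \<open>{v, u} \<in> S\<close>]
    by blast
qed

lemma in_edges_star_orientation:
  assumes "simple_graph V E" "partition_on E P" "\<forall>S\<in>P. \<forall>e\<in>S. c S \<in> e"
  shows "in_edges (star_orientation P c) v = \<Union>{S \<in> P. c S = v}"
proof (intro equalityI subsetI)
  fix e assume "e \<in> in_edges (star_orientation P c) v"
  then show "e \<in> \<Union>{S \<in> P. c S = v}"
    by (auto simp: in_edges_def star_orientation_def)
next
  fix e assume "e \<in> \<Union>{S \<in> P. c S = v}"
  then obtain S where S: "S \<in> P" "c S = v" "e \<in> S"
    by blast
  then have "v \<in> e" "card e = 2"
    using assms partition_onD1[OF assms(2)] by (auto simp: simple_graph_def)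
  then obtain u where "e = {u, v}"
    by (auto simp: card_2_iff insert_commute)
  with S show "e \<in> in_edges (star_orientation P c) v"
    by (auto simp: in_edges_def star_orientation_def)
qed

lemma star_decomposition_imp_in_deg_dvd:
  assumes "simple_graph V E" "star_decomposition k E P"
  shows "\<exists>D. orientation E D \<and> (\<forall>v. k dvd in_deg D v)"
proof -
  have P: "partition_on E P" "\<forall>S\<in>P. card S = k \<and> (\<exists>c. \<forall>e\<in>S. c \<in> e)"
    using assms(2) by (auto simp: star_decomposition_def is_star_def)
  then obtain c where c: "\<forall>S\<in>P. \<forall>e\<in>S. c S \<in> e"
    by metis
  let ?D = "star_orientation P c"
  have "k dvd in_deg ?D v" for v
  proof -
    have "finite (\<Union>{S \<in> P. c S = v})"
      using partition_onD1[OF P(1)] simple_graph_finite_edges[OF assms(1)]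
      by (auto intro: finite_subset)
    moreover have "pairwise disjnt {S \<in> P. c S = v}"
      using partition_onD2[OF P(1)] by (rule pairwise_subset) auto
    ultimately show ?thesis
      unfolding in_deg_eq_card_in_edges in_edges_star_orientation[OF assms(1) P(1) c]
      by (rule dvd_card_Union_card_eq) (use P(2) in auto)
  qed
  with orientation_star_orientation[OF assms(1) P(1) c] show ?thesis
    by blast
qed

theorem lemma6:
  fixes V :: "'a set" and E :: "'a set set" and d n k :: nat
  assumes "simple_graph V E"
    and "regular V E d"
    and "card V = n"
    and "odd k" and "k \<ge> 3"
    and "2 * k dvd d * n"
  shows "has_star_decomposition k E \<longleftrightarrow>
    (\<exists>D. orientation E D \<and>
       (\<forall>v\<in>V. (int (out_deg D v) - int (in_deg D v)) mod int k = int d mod int k))"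
proof -
  have balanced_iff_dvd:
    "(int (out_deg D v) - int (in_deg D v)) mod int k = int d mod int k \<longleftrightarrow> k dvd in_deg D v"
    if "orientation E D" "v \<in> V" for D v
  proof (rule diff_mod_eq_iff_dvd[OF \<open>odd k\<close>])
    show "out_deg D v + in_deg D v = d"
      using degree_eq_out_deg_plus_in_deg[OF assms(1) that(1)] assms(2) that(2)
      by (simp add: regular_def)
  qed
  show ?thesis
  proof
    assume "has_star_decomposition k E"
    then obtain D where "orientation E D" "\<forall>v. k dvd in_deg D v"
      using star_decomposition_imp_in_deg_dvd[OF assms(1)] unfolding has_star_decomposition_def
      by blast
    then show "\<exists>D. orientation E D \<and>
       (\<forall>v\<in>V. (int (out_deg D v) - int (in_deg D v)) mod int k = int d mod int k)"
      using balanced_iff_dvd by blast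
  next
    assume "\<exists>D. orientation E D \<and>
       (\<forall>v\<in>V. (int (out_deg D v) - int (in_deg D v)) mod int k = int d mod int k)"
    then obtain D where "orientation E D" "\<forall>v\<in>V. k dvd in_deg D v"
      using balanced_iff_dvd by blast
    then show "has_star_decomposition k E"
      using in_deg_dvd_imp_star_decomposition[OF assms(1)] \<open>k \<ge> 3\<close> by simp
  qed
qed

end
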